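(* Let $J$ be an order ideal in $\mathbb N^n$ and let $\mathbf a\le\mathbf b$ in $\mathbb N^n$. Then the geometric realization of the simplicial complex $\Delta^{\mathbf b}_{\mathbf a}(J)$ is homotopy equivalent to the geometric realization of the order complex of the poset $J\cap\big(\mathbf a+(\mathbb N^n\setminus[\mathbf 0,\mathbf b-\mathbf a])\big)$.
   Context: $\mathbb N^n$ is partially ordered componentwise; $[\mathbf x,\mathbf y]=\{\mathbf z:\mathbf x\le\mathbf z\le\mathbf y\}$; $\varepsilon_i$ is the $i$-th unit vector. An order ideal $J\subseteq\mathbb N^n$ is a subset with $\mathbf x\le\mathbf y\in J\Rightarrow\mathbf x\in J$. For $\mathbf a,\mathbf b\in\mathbb N^n$, $\Delta^{\mathbf b}_{\mathbf a}(J)$ is the simplicial complex on vertex set $\{1,\dots,n\}$ whose faces are the subsets $F$ such that $\sum_{i\notin F}a_i\varepsilon_i+\sum_{i\in F}(b_i+1)\varepsilon_i\in J$. The order complex $\Delta(P)$ of a poset $P$ has vertex set $P$ and the finite chains as faces. *)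

theory Defs
  imports "HOL-Analysis.Analysis" "HOL-Library.Function_Algebras"
begin

text \<open>Order ideals in N^n, where N^n is modelled as 'n => nat for a finite index type 'n,
  ordered componentwise (the standard pointwise order on functions).\<close>
definition order_ideal :: "('n \<Rightarrow> nat) set \<Rightarrow> bool" where
  "order_ideal J \<longleftrightarrow> (\<forall>x y. x \<le> y \<and> y \<in> J \<longrightarrow> x \<in> J)"

definition Delta_complex :: "('n \<Rightarrow> nat) \<Rightarrow> ('n \<Rightarrow> nat) \<Rightarrow> ('n \<Rightarrow> nat) set \<Rightarrow> 'n set set" where
  "Delta_complex a b J = {F. (\<lambda>i. if i \<in> F then b i + 1 else a i) \<in> J}"

definition order_complex :: "'a::order set \<Rightarrow> 'a set set" where
  "order_complex P = {C. finite C \<and> C \<subseteq> P \<and> (\<forall>x\<in>C. \<forall>y\<in>C. x \<le> y \<or> y \<le> x)}"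

text \<open>Geometric realization of an abstract simplicial complex K (a set of finite faces)
  as the set of finitely supported barycentric coordinate functions whose support is a face,
  with the coherent (weak) topology with respect to the closed simplices.\<close>
definition realization_carrier :: "'v set set \<Rightarrow> ('v \<Rightarrow> real) set" where
  "realization_carrier K = {f. (\<forall>v. 0 \<le> f v) \<and> finite {v. f v \<noteq> 0} \<and>
      {v. f v \<noteq> 0} \<in> K \<and> sum f {v. f v \<noteq> 0} = 1}"

definition closed_simplex :: "'v set set \<Rightarrow> 'v set \<Rightarrow> ('v \<Rightarrow> real) set" where
  "closed_simplex K F = {f \<in> realization_carrier K. {v. f v \<noteq> 0} \<subseteq> F}"

definition geometric_realization :: "'v set set \<Rightarrow> ('v \<Rightarrow> real) topology" where
  "geometric_realization K = topology (\<lambda>U. U \<subseteq> realization_carrier K \<and>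
      (\<forall>F\<in>K. openin (subtopology euclidean (closed_simplex K F)) (U \<inter> closed_simplex K F)))"

lemma openin_Union_Int_aux:
  fixes C :: "'a::topological_space set" and \<K> :: "'a set set"
  assumes "\<forall>U\<in>\<K>. openin (subtopology euclidean C) (U \<inter> C)"
  shows "openin (subtopology euclidean C) (\<Union>\<K> \<inter> C)"
proof -
  have "openin (subtopology euclidean C) (\<Union>((\<lambda>U. U \<inter> C) ` \<K>))"
    using assms by (intro openin_Union) auto
  moreover have "\<Union>((\<lambda>U. U \<inter> C) ` \<K>) = \<Union>\<K> \<inter> C" by blast
  ultimately show ?thesis by simp
qed

lemma openin_Int_Int_aux:
  fixes C :: "'a::topological_space set"
  assumes "openin (subtopology euclidean C) (S \<inter> C)" "openin (subtopology euclidean C) (T \<inter> C)"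
  shows "openin (subtopology euclidean C) (S \<inter> T \<inter> C)"
proof -
  have "openin (subtopology euclidean C) ((S \<inter> C) \<inter> (T \<inter> C))"
    using assms by (rule openin_Int)
  moreover have "(S \<inter> C) \<inter> (T \<inter> C) = S \<inter> T \<inter> C" by blast
  ultimately show ?thesis by simp
qed

lemma istopology_geometric_realization:
  fixes K :: "'v set set"
  shows "istopology (\<lambda>U. U \<subseteq> realization_carrier K \<and>
      (\<forall>F\<in>K. openin (subtopology euclidean (closed_simplex K F)) (U \<inter> closed_simplex K F)))"
  unfolding istopology_def
proof (intro conjI allI impI)
  fix S T :: "('v \<Rightarrow> real) set"
  assume S: "S \<subseteq> realization_carrier K \<and> (\<forall>F\<in>K. openin (subtopology euclidean (closed_simplex K F)) (S \<inter> closed_simplex K F))"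
    and T: "T \<subseteq> realization_carrier K \<and> (\<forall>F\<in>K. openin (subtopology euclidean (closed_simplex K F)) (T \<inter> closed_simplex K F))"
  show "S \<inter> T \<subseteq> realization_carrier K" using S by blast
  show "\<forall>F\<in>K. openin (subtopology euclidean (closed_simplex K F)) (S \<inter> T \<inter> closed_simplex K F)"
  proof
    fix F assume "F \<in> K"
    then show "openin (subtopology euclidean (closed_simplex K F)) (S \<inter> T \<inter> closed_simplex K F)"
      using S T by (intro openin_Int_Int_aux) simp_all
  qed
next
  fix \<K> :: "('v \<Rightarrow> real) set set"
  assume H: "\<forall>U\<in>\<K>. U \<subseteq> realization_carrier K \<and> (\<forall>F\<in>K. openin (subtopology euclidean (closed_simplex K F)) (U \<inter> closed_simplex K F))"
  show "\<Union>\<K> \<subseteq> realization_carrier K" using H by blast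
  show "\<forall>F\<in>K. openin (subtopology euclidean (closed_simplex K F)) (\<Union>\<K> \<inter> closed_simplex K F)"
  proof
    fix F assume F: "F \<in> K"
    show "openin (subtopology euclidean (closed_simplex K F)) (\<Union>\<K> \<inter> closed_simplex K F)"
      by (rule openin_Union_Int_aux) (use H F in blast)
  qed
qed

end

theory Submission
  imports Defs
begin

text \<open>
  Let \<open>P = J \<inter> (a + (\<nat>\<^sup>n \<setminus> [0, b - a]))\<close>, i.e. the points \<open>p \<in> J\<close> with \<open>a \<le> p\<close> and
  \<open>p \<not>\<le> b\<close>. A face \<open>G\<close> of \<open>\<Delta> = \<Delta>\<^sup>b\<^sub>a(J)\<close> corresponds to the lattice point \<open>a\<^sup>G\<close> (equal to
  \<open>b\<^sub>i + 1\<close> on \<open>G\<close> and \<open>a\<^sub>i\<close> elsewhere), and every \<open>p \<in> P\<close> lies above its corner, the face point of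
  \<open>E(p) = {i. b\<^sub>i < p\<^sub>i}\<close>, which again lies in \<open>P\<close>. We write down explicit maps
    \<open>\<phi> : |\<Delta>| \<rightarrow> |\<Delta>(P)|\<close>, sending \<open>f\<close> to the chain of its super-level sets \<open>G\<close>, with weight
        the gap between the values of \<open>f\<close> on \<open>G\<close> and off \<open>G\<close>;
    \<open>\<psi> : |\<Delta>(P)| \<rightarrow> |\<Delta>|\<close>, giving coordinate \<open>i\<close> the mass of the chain elements \<open>c\<close> with \<open>i \<in> E(c)\<close>;
  and show that they are mutually inverse homotopy equivalences: \<open>\<psi> \<circ> \<phi> \<simeq> id\<close> by a straight
  line (supports do not grow), while \<open>id \<simeq> \<phi> \<circ> \<psi>\<close> goes through the map pushing every vertex
  to its corner, first by a prism homotopy that moves the mass along the chain, then by a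
  straight line.
\<close>

section \<open>Geometric realizations of abstract simplicial complexes\<close>

definition supp :: "('v \<Rightarrow> real) \<Rightarrow> 'v set" where
  "supp f = {v. f v \<noteq> 0}"

text \<open>An abstract simplicial complex: faces are finite and every non-empty subset of a face is a
  face.\<close>
definition abstract_complex :: "'v set set \<Rightarrow> bool" where
  "abstract_complex L \<longleftrightarrow> (\<forall>F\<in>L. finite F \<and> (\<forall>G. G \<subseteq> F \<longrightarrow> G \<noteq> {} \<longrightarrow> G \<in> L))"

lemma openin_realization:
  "openin (geometric_realization K) U \<longleftrightarrow> U \<subseteq> realization_carrier K \<and>
      (\<forall>F\<in>K. openin (top_of_set (closed_simplex K F)) (U \<inter> closed_simplex K F))"
  unfolding geometric_realization_def
  by (subst topology_inverse'[OF istopology_geometric_realization]) simp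

lemma closed_simplex_subset_carrier: "closed_simplex K F \<subseteq> realization_carrier K"
  by (auto simp: closed_simplex_def)

lemma closed_simplex_eq: "closed_simplex L C = {f \<in> realization_carrier L. supp f \<subseteq> C}"
  by (simp add: closed_simplex_def supp_def)

lemma topspace_realization: "topspace (geometric_realization K) = realization_carrier K"
proof -
  have "openin (geometric_realization K) (realization_carrier K)"
    unfolding openin_realization by (simp add: inf.absorb2 closed_simplex_subset_carrier)
  then show ?thesis
    by (metis openin_realization openin_subset openin_topspace subset_antisym)
qed

lemma carrier_D:
  assumes "f \<in> realization_carrier L"
  shows "\<And>v. 0 \<le> f v" "finite (supp f)" "supp f \<in> L" "sum f (supp f) = 1"
  using assms by (auto simp: realization_carrier_def supp_def)

lemma carrier_supp_nonempty: "f \<in> realization_carrier L \<Longrightarrow> supp f \<noteq> {}"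
  using carrier_D(4) by fastforce

lemma carrier_in_own_simplex:
  assumes "x \<in> realization_carrier K"
  shows "x \<in> closed_simplex K (supp x)"
  using assms by (auto simp: closed_simplex_eq)

lemma carrier_intro:
  assumes "\<And>v. 0 \<le> f v" "finite R" "supp f \<subseteq> R" "sum f R = 1" "supp f \<in> L"
  shows "f \<in> realization_carrier L"
proof -
  have "sum f (supp f) = sum f R"
    by (rule sum.mono_neutral_left[OF assms(2,3)]) (auto simp: supp_def)
  then show ?thesis using assms finite_subset[OF assms(3,2)]
    by (auto simp: realization_carrier_def supp_def)
qed

lemma carrier_on_face_iff:
  assumes fin: "finite R" and sub: "\<And>G. G \<subseteq> R \<Longrightarrow> G \<noteq> {} \<Longrightarrow> G \<in> L"
  shows "(f \<in> realization_carrier L \<and> supp f \<subseteq> R) \<longleftrightarrow>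
         ((\<forall>v. 0 \<le> f v) \<and> (\<forall>v. v \<notin> R \<longrightarrow> f v = 0) \<and> sum f R = 1)"
proof
  assume f: "f \<in> realization_carrier L \<and> supp f \<subseteq> R"
  have "sum f (supp f) = sum f R"
    by (rule sum.mono_neutral_left[OF fin]) (use f in \<open>auto simp: supp_def\<close>)
  with f show "(\<forall>v. 0 \<le> f v) \<and> (\<forall>v. v \<notin> R \<longrightarrow> f v = 0) \<and> sum f R = 1"
    by (auto simp: realization_carrier_def supp_def)
next
  assume f: "(\<forall>v. 0 \<le> f v) \<and> (\<forall>v. v \<notin> R \<longrightarrow> f v = 0) \<and> sum f R = 1"
  have s: "supp f \<subseteq> R" using f by (auto simp: supp_def)
  have "sum f (supp f) = sum f R"
    by (rule sum.mono_neutral_left[OF fin s]) (auto simp: supp_def)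
  with f have "supp f \<noteq> {}" by auto
  then have "supp f \<in> L" using sub s by blast
  then show "f \<in> realization_carrier L \<and> supp f \<subseteq> R"
    using carrier_intro[OF _ fin s] f s by blast
qed

lemma convex_combination_in_face:
  assumes L: "abstract_complex L"
    and u: "u \<in> realization_carrier L" and w: "w \<in> realization_carrier L"
    and face: "supp u \<union> supp w \<in> L" and t: "t \<in> {0..1::real}"
  shows "(\<lambda>v. (1 - t) * u v + t * w v) \<in> realization_carrier L"
proof -
  define R where "R = supp u \<union> supp w"
  have fin: "finite R" and sub: "\<And>G. G \<subseteq> R \<Longrightarrow> G \<noteq> {} \<Longrightarrow> G \<in> L"
    using L face unfolding abstract_complex_def R_def by blast+
  have U: "(\<forall>v. 0 \<le> u v) \<and> (\<forall>v. v \<notin> R \<longrightarrow> u v = 0) \<and> sum u R = 1"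
    using carrier_on_face_iff[OF fin sub] u R_def by blast
  have W: "(\<forall>v. 0 \<le> w v) \<and> (\<forall>v. v \<notin> R \<longrightarrow> w v = 0) \<and> sum w R = 1"
    using carrier_on_face_iff[OF fin sub] w R_def by blast
  have "sum (\<lambda>v. (1 - t) * u v + t * w v) R = (1 - t) * sum u R + t * sum w R"
    by (simp add: sum.distrib sum_distrib_left)
  also have "\<dots> = 1" using U W by simp
  finally have "sum (\<lambda>v. (1 - t) * u v + t * w v) R = 1" .
  moreover have "\<forall>v. 0 \<le> (1 - t) * u v + t * w v" using U W t by simp
  moreover have "\<forall>v. v \<notin> R \<longrightarrow> (1 - t) * u v + t * w v = 0" using U W by simp
  ultimately show ?thesis
    using carrier_on_face_iff[OF fin sub] by blast
qed

lemma closed_closed_simplex: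
  assumes L: "abstract_complex L" and C: "C \<in> L"
  shows "closed (closed_simplex L C)"
proof -
  have fin: "finite C" and sub: "\<And>G. G \<subseteq> C \<Longrightarrow> G \<noteq> {} \<Longrightarrow> G \<in> L"
    using L C unfolding abstract_complex_def by blast+
  have eq: "closed_simplex L C =
      (\<Inter>v. {f. 0 \<le> f v}) \<inter> (\<Inter>v\<in>-C. {f. f v = 0}) \<inter> {f. sum f C = 1}"
    unfolding closed_simplex_eq using carrier_on_face_iff[OF fin sub] by blast
  show ?thesis
    unfolding eq
    by (intro closed_Int closed_INT ballI closed_Collect_le closed_Collect_eq
        continuous_on_const continuous_on_sum continuous_on_product_coordinates)
qed

lemma continuous_on_coordinate [continuous_intros]:
  "continuous_on S (\<lambda>x::'a \<Rightarrow> 'b::topological_space. x i)"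
  by (rule continuous_on_subset[OF continuous_on_product_coordinates]) simp

text \<open>Since \<open>[0,1]\<close> is compact, \<open>[0,1] \<times> |K|\<close> carries the coherent topology with respect to
  the products \<open>[0,1] \<times> \<sigma>\<close> of closed simplices. Both halves of the argument rest on the
  tube lemma.\<close>

lemma open_tube_set:
  fixes OG :: "(real \<times> 'a::topological_space) set"
  assumes "open OG" "compact T"
  shows "open {y. \<forall>s\<in>T. (s, y) \<in> OG}"
proof (subst open_subopen, intro ballI)
  let ?W = "prod.swap -` OG"
  have "open ?W" using assms(1) by (intro open_vimage continuous_on_swap)
  fix y0 assume "y0 \<in> {y. \<forall>s\<in>T. (s, y) \<in> OG}"
  then have "{y0} \<times> T \<subseteq> ?W" by auto
  from Elementary_Topology.tube_lemma[OF assms(2) \<open>open ?W\<close> this]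
  obtain X0 where X0: "y0 \<in> X0" "open X0" "X0 \<times> T \<subseteq> ?W" by blast
  have "X0 \<subseteq> {y. \<forall>s\<in>T. (s, y) \<in> OG}"
  proof (intro subsetI CollectI ballI)
    fix y s assume "y \<in> X0" "s \<in> T"
    then have "(y, s) \<in> ?W" using X0(3) by blast
    then show "(s, y) \<in> OG" by simp
  qed
  then show "\<exists>T'. open T' \<and> y0 \<in> T' \<and> T' \<subseteq> {y. \<forall>s\<in>T. (s, y) \<in> OG}"
    using X0 by blast
qed

lemma openin_realization_tube:
  assumes loc: "\<And>F. F \<in> K \<Longrightarrow>
      openin (top_of_set ({0..1} \<times> closed_simplex K F)) (W \<inter> ({0..1} \<times> closed_simplex K F))"
    and T: "compact T" "T \<subseteq> {0..1::real}"
  shows "openin (geometric_realization K) {y \<in> realization_carrier K. \<forall>s\<in>T. (s, y) \<in> W}"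
  unfolding openin_realization
proof (intro conjI ballI)
  fix G assume "G \<in> K"
  from loc[OF this] obtain OG where "open OG"
    and eqG: "W \<inter> ({0..1} \<times> closed_simplex K G) = ({0..1} \<times> closed_simplex K G) \<inter> OG"
    unfolding openin_open by blast
  have key: "(s, y) \<in> W \<longleftrightarrow> (s, y) \<in> OG" if "s \<in> T" "y \<in> closed_simplex K G" for s y
  proof -
    have "(s, y) \<in> W \<inter> ({0..1} \<times> closed_simplex K G) \<longleftrightarrow>
        (s, y) \<in> ({0..1} \<times> closed_simplex K G) \<inter> OG"
      by (simp only: eqG)
    moreover have "(s, y) \<in> {0..1} \<times> closed_simplex K G" using that T(2) by auto
    ultimately show ?thesis by blast
  qed
  have "{y \<in> realization_carrier K. \<forall>s\<in>T. (s, y) \<in> W} \<inter> closed_simplex K G =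
        closed_simplex K G \<inter> {y. \<forall>s\<in>T. (s, y) \<in> OG}"
    using key closed_simplex_subset_carrier[of K G] by blast
  then show "openin (top_of_set (closed_simplex K G))
      ({y \<in> realization_carrier K. \<forall>s\<in>T. (s, y) \<in> W} \<inter> closed_simplex K G)"
    using open_tube_set[OF \<open>open OG\<close> T(1)] by (simp add: openin_open_Int)
qed blast

lemma openin_slice_segment:
  assumes loc: "openin (top_of_set ({0..1} \<times> S)) (W \<inter> ({0..1} \<times> S))"
    and x: "x \<in> S" and t: "t \<in> {0..1::real}" and tx: "(t, x) \<in> W"
  obtains d where "d > 0" "\<And>s. s \<in> cball t d \<inter> {0..1} \<Longrightarrow> (s, x) \<in> W"
proof -
  from loc obtain N where "open N" and eqN: "W \<inter> ({0..1} \<times> S) = ({0..1} \<times> S) \<inter> N"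
    unfolding openin_open by blast
  have inW: "(s, x) \<in> W \<longleftrightarrow> (s, x) \<in> N" if "s \<in> {0..1}" for s
  proof -
    have "(s, x) \<in> W \<inter> ({0..1} \<times> S) \<longleftrightarrow> (s, x) \<in> ({0..1} \<times> S) \<inter> N" by (simp only: eqN)
    then show ?thesis using that x by blast
  qed
  have "(t, x) \<in> N" using inW[OF t] tx by blast
  then obtain A B where AB: "open A" "open B" "(t, x) \<in> A \<times> B" "A \<times> B \<subseteq> N"
    by (rule open_prod_elim[OF \<open>open N\<close>])
  then obtain d where d: "d > 0" "cball t d \<subseteq> A"
    using open_contains_cball by blast
  have "(s, x) \<in> W" if "s \<in> cball t d \<inter> {0..1}" for s
  proof -
    have "(s, x) \<in> A \<times> B" using that d(2) AB(3) by blast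
    then show ?thesis using inW AB(4) that by blast
  qed
  then show ?thesis using d(1) that by blast
qed

lemma openin_prod_realization:
  assumes W: "W \<subseteq> {0..1} \<times> realization_carrier K"
    and loc: "\<And>F. F \<in> K \<Longrightarrow>
      openin (top_of_set ({0..1} \<times> closed_simplex K F)) (W \<inter> ({0..1} \<times> closed_simplex K F))"
  shows "openin (prod_topology (top_of_set {0..1::real}) (geometric_realization K)) W"
  unfolding openin_prod_topology_alt
proof (intro allI impI)
  fix t x assume tx: "(t, x) \<in> W"
  then have t: "t \<in> {0..1}" and x: "x \<in> realization_carrier K" using W by auto
  obtain d where d: "d > 0" "\<And>s. s \<in> cball t d \<inter> {0..1} \<Longrightarrow> (s, x) \<in> W"
    by (rule openin_slice_segment[OF loc[OF carrier_D(3)[OF x]] carrier_in_own_simplex[OF x] t tx]) blast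
  define T where "T = cball t d \<inter> {0..1}"
  define V where "V = {y \<in> realization_carrier K. \<forall>s\<in>T. (s, y) \<in> W}"
  have "x \<in> V" unfolding V_def T_def using x d(2) by blast
  moreover have "openin (geometric_realization K) V"
    unfolding V_def T_def by (rule openin_realization_tube[OF loc]) (auto intro: compact_Int_closed)
  moreover have "({0..1} \<inter> ball t d) \<times> V \<subseteq> W"
  proof (rule subsetI)
    fix p assume "p \<in> ({0..1} \<inter> ball t d) \<times> V"
    then obtain s y where "p = (s, y)" "s \<in> T" "y \<in> V" unfolding T_def by auto
    then show "p \<in> W" unfolding V_def by blast
  qed
  moreover have "openin (top_of_set {0..1}) ({0..1} \<inter> ball t d)" "t \<in> {0..1} \<inter> ball t d"
    using t d(1) by (auto simp: openin_open_Int)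
  ultimately show "\<exists>U V. openin (top_of_set {0..1}) U \<and> openin (geometric_realization K) V \<and>
      t \<in> U \<and> x \<in> V \<and> U \<times> V \<subseteq> W"
    by blast
qed

lemma continuous_map_prod_realization:
  assumes into: "\<And>t x. t \<in> {0..1} \<Longrightarrow> x \<in> realization_carrier K \<Longrightarrow> h (t, x) \<in> topspace Z"
    and loc: "\<And>F U. F \<in> K \<Longrightarrow> openin Z U \<Longrightarrow>
      openin (top_of_set ({0..1} \<times> closed_simplex K F)) {p \<in> {0..1} \<times> closed_simplex K F. h p \<in> U}"
  shows "continuous_map (prod_topology (top_of_set {0..1::real}) (geometric_realization K)) Z h"
proof -
  have top: "topspace (prod_topology (top_of_set {0..1::real}) (geometric_realization K)) =
      {0..1} \<times> realization_carrier K"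
    by (simp add: topspace_realization)
  show ?thesis unfolding continuous_map_def top
  proof (intro conjI allI impI)
    show "h \<in> {0..1} \<times> realization_carrier K \<rightarrow> topspace Z" using into by auto
    fix U assume U: "openin Z U"
    have "{p \<in> {0..1} \<times> realization_carrier K. h p \<in> U} \<inter> ({0..1} \<times> closed_simplex K F) =
          {p \<in> {0..1} \<times> closed_simplex K F. h p \<in> U}" for F
      using closed_simplex_subset_carrier[of K F] by blast
    then show "openin (prod_topology (top_of_set {0..1}) (geometric_realization K))
        {p \<in> {0..1} \<times> realization_carrier K. h p \<in> U}"
      using loc[OF _ U] by (intro openin_prod_realization) auto
  qed
qed

lemma continuous_on_prism:
  "continuous_on S f \<Longrightarrow> continuous_on (T \<times> S) (\<lambda>z. f (snd z))"
  by (rule continuous_on_compose2[OF _ continuous_on_snd[OF continuous_on_id]]) auto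

text \<open>Continuity into \<open>|L|\<close> can then be tested in the product topology.\<close>
definition maps_into_finite_subcomplex :: "'w set set \<Rightarrow> 'x set \<Rightarrow> ('x \<Rightarrow> 'w \<Rightarrow> real) \<Rightarrow> bool"
  where "maps_into_finite_subcomplex L S h \<longleftrightarrow>
    (\<exists>H. finite H \<and> (\<forall>p\<in>S. h p \<in> realization_carrier L \<and> supp (h p) \<subseteq> H))"

text \<open>Preimages of open sets of \<open>|L|\<close>: the points of \<open>|L|\<close> supported in a finite \<open>H\<close> form a
  finite union of closed simplices, on each of which the complement of an open set is closed.\<close>
lemma openin_preimage_realization:
  fixes h :: "'x::topological_space \<Rightarrow> ('v \<Rightarrow> real)"
  assumes L: "abstract_complex L" and cont: "continuous_on S h"
    and fin: "maps_into_finite_subcomplex L S h"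
    and U: "openin (geometric_realization L) U"
  shows "openin (top_of_set S) {p \<in> S. h p \<in> U}"
proof -
  obtain H where H: "finite H" "\<And>p. p \<in> S \<Longrightarrow> h p \<in> realization_carrier L \<and> supp (h p) \<subseteq> H"
    using fin unfolding maps_into_finite_subcomplex_def by blast
  define A where "A = {y \<in> realization_carrier L. supp y \<subseteq> H}"
  define Cs where "Cs = {C \<in> L. C \<subseteq> H}"
  have "finite Cs" unfolding Cs_def using H(1) by (auto intro: rev_finite_subset[of "Pow H"])
  have eqAU: "A - U = (\<Union>C\<in>Cs. closed_simplex L C - U)"
    unfolding A_def Cs_def closed_simplex_eq using carrier_D(3) by fastforce
  have closedC: "closed (closed_simplex L C - U)" if "C \<in> Cs" for C
  proof -
    have CL: "C \<in> L" using that Cs_def by auto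
    then have "openin (top_of_set (closed_simplex L C)) (U \<inter> closed_simplex L C)"
      using U unfolding openin_realization by blast
    then have "closedin (top_of_set (closed_simplex L C)) (closed_simplex L C - (U \<inter> closed_simplex L C))"
      by (intro closedin_diff) auto
    moreover have "closed_simplex L C - (U \<inter> closed_simplex L C) = closed_simplex L C - U" by blast
    ultimately have "closedin (top_of_set (closed_simplex L C)) (closed_simplex L C - U)" by simp
    then show ?thesis using closedin_closed_trans closed_closed_simplex[OF L CL] by blast
  qed
  have "closed (A - U)"
    unfolding eqAU using \<open>finite Cs\<close> closedC by (intro closed_UN) auto
  then have "openin (top_of_set S) (S - (S \<inter> h -` (A - U)))"
    by (intro openin_diff continuous_closedin_preimage[OF cont]) auto
  moreover have "S - (S \<inter> h -` (A - U)) = {p \<in> S. h p \<in> U}"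
    using H(2) unfolding A_def by auto
  ultimately show ?thesis by simp
qed

lemma homotopic_realization_maps:
  fixes h :: "real \<times> ('v \<Rightarrow> real) \<Rightarrow> ('w \<Rightarrow> real)"
  assumes L: "abstract_complex L"
    and loc: "\<And>F. F \<in> K \<Longrightarrow> continuous_on ({0..1} \<times> closed_simplex K F) h \<and>
      maps_into_finite_subcomplex L ({0..1} \<times> closed_simplex K F) h"
    and h0: "\<And>x. x \<in> realization_carrier K \<Longrightarrow> h (0, x) = f x"
    and h1: "\<And>x. x \<in> realization_carrier K \<Longrightarrow> h (1, x) = g x"
  shows "homotopic_with (\<lambda>_. True) (geometric_realization K) (geometric_realization L) f g"
proof -
  have "continuous_map (prod_topology (top_of_set {0..1}) (geometric_realization K))
      (geometric_realization L) h"
  proof (rule continuous_map_prod_realization)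
    fix t x assume "t \<in> {0..1::real}" "x \<in> realization_carrier K"
    then show "h (t, x) \<in> topspace (geometric_realization L)"
      using loc[OF carrier_D(3)] carrier_in_own_simplex
      by (fastforce simp: topspace_realization maps_into_finite_subcomplex_def)
  next
    fix F U assume "F \<in> K" "openin (geometric_realization L) U"
    then show "openin (top_of_set ({0..1} \<times> closed_simplex K F))
        {p \<in> {0..1} \<times> closed_simplex K F. h p \<in> U}"
      using loc openin_preimage_realization[OF L] by blast
  qed
  then show ?thesis
    using h0 h1 by (subst homotopic_with) (auto simp: topspace_realization intro!: exI[of _ h])
qed

lemma continuous_map_realizations:
  fixes f :: "('v \<Rightarrow> real) \<Rightarrow> ('w \<Rightarrow> real)"
  assumes L: "abstract_complex L"
    and loc: "\<And>F. F \<in> K \<Longrightarrow> continuous_on (closed_simplex K F) f \<and>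
      maps_into_finite_subcomplex L (closed_simplex K F) f"
  shows "continuous_map (geometric_realization K) (geometric_realization L) f"
proof -
  have "homotopic_with (\<lambda>_. True) (geometric_realization K) (geometric_realization L) f f"
  proof (rule homotopic_realization_maps[OF L, of _ "\<lambda>z. f (snd z)"])
    fix F assume F: "F \<in> K"
    then obtain H where "finite H"
      "\<forall>x\<in>closed_simplex K F. f x \<in> realization_carrier L \<and> supp (f x) \<subseteq> H"
      using loc unfolding maps_into_finite_subcomplex_def by blast
    moreover have "continuous_on ({0..1} \<times> closed_simplex K F) (\<lambda>z. f (snd z))"
      using loc[OF F] continuous_on_prism by blast
    ultimately show "continuous_on ({0..1} \<times> closed_simplex K F) (\<lambda>z. f (snd z)) \<and>
        maps_into_finite_subcomplex L ({0..1} \<times> closed_simplex K F) (\<lambda>z. f (snd z))"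
      unfolding maps_into_finite_subcomplex_def by auto
  qed auto
  then show ?thesis using homotopic_with_imp_continuous_maps by blast
qed

lemma homotopic_straight_line:
  fixes f g :: "('v \<Rightarrow> real) \<Rightarrow> ('w \<Rightarrow> real)"
  assumes L: "abstract_complex L"
    and cont: "\<And>F. F \<in> K \<Longrightarrow>
      continuous_on (closed_simplex K F) f \<and> continuous_on (closed_simplex K F) g"
    and bounded: "\<And>F. F \<in> K \<Longrightarrow>
      \<exists>H. finite H \<and> (\<forall>x\<in>closed_simplex K F. supp (f x) \<union> supp (g x) \<subseteq> H)"
    and into: "\<And>x. x \<in> realization_carrier K \<Longrightarrow>
      f x \<in> realization_carrier L \<and> g x \<in> realization_carrier L \<and> supp (f x) \<union> supp (g x) \<in> L"
  shows "homotopic_with (\<lambda>_. True) (geometric_realization K) (geometric_realization L) f g"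
proof (rule homotopic_realization_maps[OF L])
  let ?h = "\<lambda>z v. (1 - fst z) * f (snd z) v + fst z * g (snd z) v"
  fix F assume F: "F \<in> K"
  let ?D = "{0..1::real} \<times> closed_simplex K F"
  have "continuous_on ?D (\<lambda>z. f (snd z))" "continuous_on ?D (\<lambda>z. g (snd z))"
    using cont[OF F] continuous_on_prism by blast+
  then have "continuous_on ?D (\<lambda>z. f (snd z) v)" "continuous_on ?D (\<lambda>z. g (snd z) v)" for v
    by (auto intro: continuous_on_product_then_coordinatewise)
  then have "continuous_on ?D ?h"
    by (intro continuous_on_coordinatewise_then_product continuous_on_add continuous_on_mult
        continuous_on_diff continuous_on_const continuous_on_fst continuous_on_id)
  then show "continuous_on ?D ?h \<and> maps_into_finite_subcomplex L ?D ?h"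
  proof (intro conjI)
    obtain H where H: "finite H" "\<And>x. x \<in> closed_simplex K F \<Longrightarrow> supp (f x) \<union> supp (g x) \<subseteq> H"
      using bounded[OF F] by blast
    have "?h z \<in> realization_carrier L \<and> supp (?h z) \<subseteq> H" if "z \<in> ?D" for z
    proof
      have z: "snd z \<in> closed_simplex K F" "fst z \<in> {0..1}" using that by auto
      then have "snd z \<in> realization_carrier K" using closed_simplex_subset_carrier by blast
      then show "?h z \<in> realization_carrier L"
        using into z(2) by (intro convex_combination_in_face[OF L]) auto
      have "supp (?h z) \<subseteq> supp (f (snd z)) \<union> supp (g (snd z))" by (auto simp: supp_def)
      then show "supp (?h z) \<subseteq> H" using H(2)[OF z(1)] by blast
    qed
    then show "maps_into_finite_subcomplex L ?D ?h"
      unfolding maps_into_finite_subcomplex_def using H(1) by blast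
  qed
qed auto

section \<open>The two complexes of the theorem\<close>

definition face_point :: "('n \<Rightarrow> nat) \<Rightarrow> ('n \<Rightarrow> nat) \<Rightarrow> 'n set \<Rightarrow> ('n \<Rightarrow> nat)" where
  "face_point a b G = (\<lambda>i. if i \<in> G then b i + 1 else a i)"

definition excess :: "('n \<Rightarrow> nat) \<Rightarrow> ('n \<Rightarrow> nat) \<Rightarrow> 'n set" where
  "excess b p = {i. b i < p i}"

definition corner :: "('n \<Rightarrow> nat) \<Rightarrow> ('n \<Rightarrow> nat) \<Rightarrow> ('n \<Rightarrow> nat) \<Rightarrow> ('n \<Rightarrow> nat)" where
  "corner a b p = face_point a b (excess b p)"

definition outer_part :: "('n \<Rightarrow> nat) \<Rightarrow> ('n \<Rightarrow> nat) \<Rightarrow> ('n \<Rightarrow> nat) set \<Rightarrow> ('n \<Rightarrow> nat) set" where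
  "outer_part a b J = J \<inter> (\<lambda>c. a + c) ` (UNIV - {0..b - a})"

lemma Delta_complex_iff: "F \<in> Delta_complex a b J \<longleftrightarrow> face_point a b F \<in> J"
  by (simp add: Delta_complex_def face_point_def)

lemma excess_mono: "p \<le> q \<Longrightarrow> excess b p \<subseteq> excess b q"
  by (auto simp: excess_def le_fun_def intro: less_le_trans)

lemma order_complex_abstract_complex: "abstract_complex (order_complex P)"
  unfolding abstract_complex_def order_complex_def by (auto intro: finite_subset)

lemma order_complex_carrier_D:
  assumes "g \<in> realization_carrier (order_complex P)"
  shows "finite (supp g)" "supp g \<subseteq> P" "\<And>x y. x \<in> supp g \<Longrightarrow> y \<in> supp g \<Longrightarrow> x \<le> y \<or> y \<le> x"
  using carrier_D(3)[OF assms] unfolding order_complex_def by auto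

lemma outer_part_iff:
  assumes ab: "a \<le> b"
  shows "p \<in> outer_part a b J \<longleftrightarrow> p \<in> J \<and> a \<le> p \<and> \<not> p \<le> b"
proof
  assume "p \<in> outer_part a b J"
  then obtain c where p: "p \<in> J" "p = a + c" "\<not> c \<le> b - a" by (auto simp: outer_part_def)
  have "c \<le> b - a" if "p \<le> b"
  proof (rule le_funI)
    fix i
    have "a i + c i \<le> b i" using le_funD[OF that, of i] p(2) by simp
    then show "c i \<le> (b - a) i" by simp
  qed
  then have "\<not> p \<le> b" using p(3) by blast
  moreover have "a \<le> p" using p(2) by (simp add: le_funI)
  ultimately show "p \<in> J \<and> a \<le> p \<and> \<not> p \<le> b" using p(1) by blast
next
  assume p: "p \<in> J \<and> a \<le> p \<and> \<not> p \<le> b"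
  then have ap: "a i \<le> p i" for i by (simp add: le_funD)
  have "p = a + (p - a)" using ap by (simp add: fun_eq_iff)
  moreover have "p \<le> b" if "p - a \<le> b - a"
  proof (rule le_funI)
    fix i
    have "p i - a i \<le> b i - a i" using le_funD[OF that, of i] by simp
    then show "p i \<le> b i" using ap[of i] le_funD[OF ab, of i] by linarith
  qed
  then have "p - a \<notin> {0..b - a}" using p by auto
  ultimately show "p \<in> outer_part a b J"
    using p unfolding outer_part_def by (auto intro!: image_eqI[of p _ "p - a"])
qed

locale ideal_box =
  fixes a b :: "'n::finite \<Rightarrow> nat" and J :: "('n \<Rightarrow> nat) set"
  assumes a_le_b: "a \<le> b" and ideal: "order_ideal J"
begin

abbreviation "P \<equiv> outer_part a b J"
abbreviation "KD \<equiv> Delta_complex a b J"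
abbreviation "KP \<equiv> order_complex P"

lemma ideal_down: "x \<le> y \<Longrightarrow> y \<in> J \<Longrightarrow> x \<in> J"
  using ideal unfolding order_ideal_def by blast

lemma P_iff: "p \<in> P \<longleftrightarrow> p \<in> J \<and> a \<le> p \<and> \<not> p \<le> b"
  by (rule outer_part_iff[OF a_le_b])

lemma excess_face_point: "excess b (face_point a b G) = G"
  using a_le_b by (auto simp: excess_def face_point_def le_fun_def not_less) (metis leD)

lemma face_point_mono: "G \<subseteq> G' \<Longrightarrow> face_point a b G \<le> face_point a b G'"
  using a_le_b by (auto simp: face_point_def le_fun_def) (metis le_SucI order_refl)

lemma inj_face_point: "inj_on (face_point a b) A"
  by (metis excess_face_point inj_onI)

lemma abstract_complex_KD: "abstract_complex KD"
  unfolding abstract_complex_def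
proof (intro ballI conjI allI impI)
  fix F G assume "F \<in> KD" "G \<subseteq> F" "G \<noteq> {}"
  then show "G \<in> KD" using face_point_mono ideal_down Delta_complex_iff by blast
qed simp

lemma face_point_in_P: "G \<noteq> {} \<Longrightarrow> face_point a b G \<in> J \<Longrightarrow> face_point a b G \<in> P"
  unfolding P_iff using a_le_b by (auto simp: face_point_def le_fun_def) (metis le_SucI)

lemma excess_nonempty: "p \<in> P \<Longrightarrow> excess b p \<noteq> {}"
  unfolding P_iff by (auto simp: excess_def le_fun_def not_le)

lemma corner_le: "p \<in> P \<Longrightarrow> corner a b p \<le> p"
  unfolding P_iff by (auto simp: corner_def face_point_def excess_def le_fun_def)

lemma corner_mono: "p \<le> q \<Longrightarrow> corner a b p \<le> corner a b q"
  unfolding corner_def by (intro face_point_mono excess_mono)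

lemma corner_in_P:
  assumes p: "p \<in> P" shows "corner a b p \<in> P"
proof -
  have "corner a b p \<in> J" using corner_le[OF p] p ideal_down unfolding P_iff by blast
  then show ?thesis using face_point_in_P excess_nonempty[OF p] unfolding corner_def by blast
qed

lemma excess_in_KD: "p \<in> P \<Longrightarrow> excess b p \<in> KD"
  using corner_in_P unfolding P_iff corner_def Delta_complex_iff by blast

lemma corners_face:
  assumes g: "g \<in> realization_carrier KP" and G: "G \<subseteq> corner a b ` supp g" "G \<noteq> {}"
  shows "G \<in> KP"
proof -
  have "finite G"
    using G(1) by (rule finite_subset) (use order_complex_carrier_D(1)[OF g] in simp)
  moreover have "G \<subseteq> P" using G order_complex_carrier_D(2)[OF g] corner_in_P by blast
  moreover have "\<forall>x\<in>G. \<forall>y\<in>G. x \<le> y \<or> y \<le> x"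
    using G order_complex_carrier_D(3)[OF g] corner_mono by blast
  ultimately show ?thesis unfolding order_complex_def by blast
qed

end

section \<open>The map from \<open>|\<Delta>|\<close> to \<open>|\<Delta>(P)|\<close>\<close>

text \<open>It is positive exactly when \<open>G\<close> is a super-level
  set of \<open>f\<close> inside its support, so positive gaps occur only along a chain of sets.\<close>
definition gap :: "('n \<Rightarrow> real) \<Rightarrow> 'n set \<Rightarrow> real" where
  "gap f G = Min (f ` G) - Max (insert 0 (f ` (- G)))"

lemma gap_pos:
  fixes f :: "'n::finite \<Rightarrow> real"
  assumes "G \<noteq> {}" "gap f G > 0"
  shows "i \<in> G \<Longrightarrow> 0 < f i" and "i \<in> G \<Longrightarrow> j \<notin> G \<Longrightarrow> f j < f i"
proof -
  have m: "Min (f ` G) \<le> f i" if "i \<in> G" for i using that by simp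
  have M: "f j \<le> Max (insert 0 (f ` (- G)))" if "j \<notin> G" for j using that by simp
  have M0: "0 \<le> Max (insert 0 (f ` (- G)))" by simp
  have g: "Max (insert 0 (f ` (- G))) < Min (f ` G)" using assms(2) by (simp add: gap_def)
  show "0 < f i" if "i \<in> G" using m[OF that] M0 g by linarith
  show "f j < f i" if "i \<in> G" "j \<notin> G" using m[OF that(1)] M[OF that(2)] g by linarith
qed

lemma positive_gaps_nested:
  fixes f :: "'n::finite \<Rightarrow> real"
  assumes "G \<noteq> {}" "gap f G > 0" "H \<noteq> {}" "gap f H > 0"
  shows "G \<subseteq> H \<or> H \<subseteq> G"
proof (rule ccontr)
  assume "\<not> ?thesis"
  then obtain i j where ij: "i \<in> G" "i \<notin> H" "j \<in> H" "j \<notin> G" by blast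
  have "f j < f i" by (rule gap_pos(2)[OF assms(1,2) ij(1,4)])
  moreover have "f i < f j" by (rule gap_pos(2)[OF assms(3,4) ij(3,2)])
  ultimately show False by simp
qed

lemma continuous_on_Min_coordinates:
  fixes G :: "'n set"
  assumes "finite G" "G \<noteq> {}"
  shows "continuous_on S (\<lambda>x::'n \<Rightarrow> real. Min (x ` G))"
  using assms
proof (induction G rule: finite_ne_induct)
  case (insert i G)
  have eq: "(\<lambda>x::'n \<Rightarrow> real. Min (x ` insert i G)) = (\<lambda>x. min (x i) (Min (x ` G)))"
    using insert by (auto simp: Min_insert)
  show ?case unfolding eq by (intro continuous_on_min insert.IH continuous_on_coordinate)
qed (simp add: continuous_on_coordinate)

lemma continuous_on_Max0_coordinates:
  fixes G :: "'n set"
  assumes "finite G"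
  shows "continuous_on S (\<lambda>x::'n \<Rightarrow> real. Max (insert 0 (x ` G)))"
  using assms
proof (induction G rule: finite_induct)
  case (insert i G)
  have eq: "(\<lambda>x::'n \<Rightarrow> real. Max (insert 0 (x ` insert i G))) =
      (\<lambda>x. max (x i) (Max (insert 0 (x ` G))))"
    using insert by (auto simp: insert_commute[of 0])
  show ?case unfolding eq by (intro continuous_on_max insert.IH continuous_on_coordinate)
qed simp

lemma continuous_on_gap:
  fixes G :: "'n::finite set"
  assumes "G \<noteq> {}"
  shows "continuous_on S (\<lambda>f. gap f G)"
  unfolding gap_def
  by (intro continuous_on_diff continuous_on_Min_coordinates continuous_on_Max0_coordinates assms)
    auto

context ideal_box
begin

definition level_weight :: "('n \<Rightarrow> real) \<Rightarrow> ('n \<Rightarrow> nat) \<Rightarrow> real" where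
  "level_weight f p =
    (if excess b p \<noteq> {} \<and> p = face_point a b (excess b p) then max 0 (gap f (excess b p)) else 0)"

definition level_total :: "('n \<Rightarrow> real) \<Rightarrow> real" where
  "level_total f = (\<Sum>G\<in>{G::'n set. G \<noteq> {}}. max 0 (gap f G))"

definition level_chain :: "('n \<Rightarrow> real) \<Rightarrow> ('n \<Rightarrow> nat) \<Rightarrow> real" where
  "level_chain f = (\<lambda>p. level_weight f p / level_total f)"

text \<open>The top level set of a point of \<open>|\<Delta>|\<close> has positive gap, so the normaliser is positive.\<close>
lemma level_total_pos:
  assumes f: "f \<in> realization_carrier KD"
  shows "0 < level_total f"
proof -
  obtain i0 where "i0 \<in> supp f" using carrier_supp_nonempty[OF f] by blast
  then have fi0: "0 < f i0" using carrier_D(1)[OF f, of i0] by (auto simp: supp_def)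
  define M where "M = Max (range f)"
  define top where "top = {i. f i = M}"
  have "M \<in> range f" unfolding M_def by (intro Max_in) auto
  then have top_ne: "top \<noteq> {}" unfolding top_def by auto
  have M_ge: "f j \<le> M" for j unfolding M_def by simp
  then have "0 < M" using fi0 by (meson less_le_trans)
  have "f ` top = {M}" using top_ne unfolding top_def by auto
  moreover have "Max (insert 0 (f ` (- top))) < M"
  proof (subst Max_less_iff, simp, simp, intro ballI)
    fix x assume "x \<in> insert 0 (f ` (- top))"
    then show "x < M"
    proof
      assume "x \<in> f ` (- top)"
      then obtain j where "x = f j" "f j \<noteq> M" unfolding top_def by auto
      then show ?thesis using M_ge[of j] by simp
    qed (use \<open>0 < M\<close> in simp)
  qed
  ultimately have "0 < gap f top" by (simp add: gap_def)
  moreover have "max 0 (gap f top) \<le> level_total f"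
    unfolding level_total_def by (rule member_le_sum) (use top_ne in auto)
  ultimately show ?thesis by simp
qed

lemma level_chain_face_point:
  "G \<noteq> {} \<Longrightarrow> level_chain f (face_point a b G) = max 0 (gap f G) / level_total f"
  by (simp add: level_chain_def level_weight_def excess_face_point)

lemma level_chain_nonzero:
  assumes "level_chain f p \<noteq> 0"
  shows "excess b p \<noteq> {}" "p = face_point a b (excess b p)" "gap f (excess b p) > 0"
  using assms by (auto simp: level_chain_def level_weight_def split: if_splits)

lemma level_chain_nonneg:
  assumes "f \<in> realization_carrier KD" shows "0 \<le> level_chain f p"
  using level_total_pos[OF assms] by (simp add: level_chain_def level_weight_def)

lemma level_chain_supp:
  assumes "p \<in> supp (level_chain f)"
  shows "p = face_point a b (excess b p)" "excess b p \<noteq> {}" "excess b p \<subseteq> supp f"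
proof -
  have nz: "level_chain f p \<noteq> 0" using assms by (simp add: supp_def)
  show "p = face_point a b (excess b p)" "excess b p \<noteq> {}" using level_chain_nonzero[OF nz] by auto
  show "excess b p \<subseteq> supp f"
  proof
    fix i assume "i \<in> excess b p"
    then have "0 < f i" using gap_pos(1) level_chain_nonzero[OF nz] by blast
    then show "i \<in> supp f" by (simp add: supp_def)
  qed
qed

lemma level_chain_sum:
  assumes f: "f \<in> realization_carrier KD"
  shows "sum (level_chain f) (face_point a b ` {G. G \<noteq> {}}) = 1"
proof -
  have "sum (level_chain f) (face_point a b ` {G. G \<noteq> {}}) =
      (\<Sum>G\<in>{G. G \<noteq> {}}. max 0 (gap f G) / level_total f)"
    by (rule sum.reindex_cong[OF inj_face_point]) (auto simp: level_chain_face_point)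
  also have "\<dots> = 1"
    using level_total_pos[OF f] by (simp add: sum_divide_distrib[symmetric] level_total_def)
  finally show ?thesis .
qed

text \<open>\<open>\<phi>\<close> lands in \<open>|\<Delta>(P)|\<close>: its support is a chain because positive-gap sets are nested,
  and it lies in \<open>P\<close> because \<open>J\<close> is an order ideal containing \<open>a\<^sup>(supp f)\<close>.\<close>
lemma level_chain_carrier:
  assumes f: "f \<in> realization_carrier KD"
  shows "level_chain f \<in> realization_carrier KP"
proof -
  define R where "R = face_point a b ` {G. G \<noteq> {}}"
  have suppR: "supp (level_chain f) \<subseteq> R"
    unfolding R_def using level_chain_supp(1,2) by blast
  have in_P: "p \<in> P" if "p \<in> supp (level_chain f)" for p
  proof -
    have "face_point a b (supp f) \<in> J" using carrier_D(3)[OF f] Delta_complex_iff by blast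
    then have "face_point a b (excess b p) \<in> J"
      using face_point_mono[OF level_chain_supp(3)[OF that]] ideal_down by blast
    then have "face_point a b (excess b p) \<in> P"
      by (rule face_point_in_P[OF level_chain_supp(2)[OF that]])
    then show ?thesis using level_chain_supp(1)[OF that] by simp
  qed
  have chain: "p \<le> q \<or> q \<le> p" if "p \<in> supp (level_chain f)" "q \<in> supp (level_chain f)" for p q
  proof -
    have "level_chain f p \<noteq> 0" "level_chain f q \<noteq> 0" using that by (auto simp: supp_def)
    then have "excess b p \<subseteq> excess b q \<or> excess b q \<subseteq> excess b p"
      by (intro positive_gaps_nested level_chain_nonzero)
    then have "face_point a b (excess b p) \<le> face_point a b (excess b q) \<or>
        face_point a b (excess b q) \<le> face_point a b (excess b p)"
      using face_point_mono by blast
    then show ?thesis using level_chain_supp(1) that by simp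
  qed
  have "finite R" unfolding R_def by simp
  then have "supp (level_chain f) \<in> KP"
    unfolding order_complex_def using finite_subset[OF suppR] in_P chain by blast
  then show ?thesis
    using carrier_intro[OF level_chain_nonneg[OF f] _ suppR] level_chain_sum[OF f] R_def by simp
qed

lemma level_chain_continuous: "continuous_on (realization_carrier KD) level_chain"
proof (rule continuous_on_coordinatewise_then_product)
  fix p
  have weight: "continuous_on (realization_carrier KD) (\<lambda>f. level_weight f p)"
  proof (cases "excess b p \<noteq> {} \<and> p = face_point a b (excess b p)")
    case True
    then have eq: "(\<lambda>f. level_weight f p) = (\<lambda>f. max 0 (gap f (excess b p)))"
      by (simp add: level_weight_def fun_eq_iff)
    show ?thesis
      unfolding eq using True by (intro continuous_on_max continuous_on_const continuous_on_gap) auto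
  next
    case False
    then have eq: "(\<lambda>f. level_weight f p) = (\<lambda>f. 0)" by (auto simp: level_weight_def fun_eq_iff)
    show ?thesis unfolding eq by (rule continuous_on_const)
  qed
  have total: "continuous_on (realization_carrier KD) level_total"
    unfolding level_total_def
    by (intro continuous_on_sum continuous_on_max continuous_on_const continuous_on_gap) auto
  have "level_total f \<noteq> 0" if "f \<in> realization_carrier KD" for f
    using level_total_pos[OF that] by simp
  then show "continuous_on (realization_carrier KD) (\<lambda>f. level_chain f p)"
    unfolding level_chain_def by (intro continuous_on_divide weight total) auto
qed

end

section \<open>The map from \<open>|\<Delta>(P)|\<close> back to \<open>|\<Delta>|\<close>\<close>

lemma nested_family_least:
  assumes "finite I" "I \<noteq> {}" "\<forall>i\<in>I. \<forall>j\<in>I. T i \<subseteq> T j \<or> T j \<subseteq> T i"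
  shows "\<exists>i0\<in>I. \<forall>i\<in>I. T i0 \<subseteq> T i"
  using assms
proof (induction I rule: finite_ne_induct)
  case (insert x F)
  then obtain i0 where i0: "i0 \<in> F" "\<forall>i\<in>F. T i0 \<subseteq> T i" by auto
  show ?case
  proof (cases "T x \<subseteq> T i0")
    case True
    then show ?thesis using i0 by auto
  next
    case False
    then have "T i0 \<subseteq> T x" using insert.prems i0(1) by blast
    then show ?thesis using i0 by blast
  qed
qed blast

lemma finite_chain_least:
  fixes C :: "'a::order set"
  assumes "finite C" "C \<noteq> {}" "\<And>x y. x \<in> C \<Longrightarrow> y \<in> C \<Longrightarrow> x \<le> y \<or> y \<le> x"
  obtains m where "m \<in> C" "\<And>c. c \<in> C \<Longrightarrow> m \<le> c"
  using finite_has_minimal[OF assms(1,2)] assms(3) by (metis order.trans)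

lemma finite_chain_greatest:
  fixes C :: "'a::order set"
  assumes "finite C" "C \<noteq> {}" "\<And>x y. x \<in> C \<Longrightarrow> y \<in> C \<Longrightarrow> x \<le> y \<or> y \<le> x"
  obtains m where "m \<in> C" "\<And>c. c \<in> C \<Longrightarrow> c \<le> m"
  using finite_has_maximal[OF assms(1,2)] assms(3) by (metis order.trans)

context ideal_box
begin

definition exceeding :: "(('n \<Rightarrow> nat) \<Rightarrow> real) \<Rightarrow> 'n \<Rightarrow> ('n \<Rightarrow> nat) set" where
  "exceeding g i = {c \<in> supp g. i \<in> excess b c}"

definition excess_total :: "(('n \<Rightarrow> nat) \<Rightarrow> real) \<Rightarrow> real" where
  "excess_total g = (\<Sum>i\<in>UNIV. sum g (exceeding g i))"

definition excess_weights :: "(('n \<Rightarrow> nat) \<Rightarrow> real) \<Rightarrow> 'n \<Rightarrow> real" where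
  "excess_weights g = (\<lambda>i. sum g (exceeding g i) / excess_total g)"

lemma exceeding_up:
  "c \<in> exceeding g i \<Longrightarrow> c' \<in> supp g \<Longrightarrow> c \<le> c' \<Longrightarrow> c' \<in> exceeding g i"
  using excess_mono unfolding exceeding_def by blast

lemma exceeding_nested:
  assumes g: "g \<in> realization_carrier KP"
  shows "exceeding g i \<subseteq> exceeding g j \<or> exceeding g j \<subseteq> exceeding g i"
proof (rule ccontr)
  assume "\<not> ?thesis"
  then obtain c1 c2 where c: "c1 \<in> exceeding g i" "c1 \<notin> exceeding g j"
    "c2 \<in> exceeding g j" "c2 \<notin> exceeding g i" by blast
  then have "c1 \<in> supp g" "c2 \<in> supp g" by (auto simp: exceeding_def)
  then have "c1 \<le> c2 \<or> c2 \<le> c1" using order_complex_carrier_D(3)[OF g] by blast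
  then show False using exceeding_up c \<open>c1 \<in> supp g\<close> \<open>c2 \<in> supp g\<close> by blast
qed

lemma sum_exceeding_nonneg: "g \<in> realization_carrier KP \<Longrightarrow> 0 \<le> sum g (exceeding g i)"
  by (intro sum_nonneg) (auto dest: carrier_D(1))

lemma excess_total_pos:
  assumes g: "g \<in> realization_carrier KP"
  shows "0 < excess_total g"
proof -
  obtain c where c: "c \<in> supp g" using carrier_supp_nonempty[OF g] by blast
  then have "c \<in> P" using order_complex_carrier_D(2)[OF g] by blast
  then obtain i where i: "i \<in> excess b c" using excess_nonempty by blast
  have "0 < g c" using c carrier_D(1)[OF g, of c] by (auto simp: supp_def)
  also have "g c \<le> sum g (exceeding g i)"
    by (rule member_le_sum)
      (use c i order_complex_carrier_D(1)[OF g] carrier_D(1)[OF g] in \<open>auto simp: exceeding_def\<close>)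
  also have "\<dots> \<le> excess_total g"
    unfolding excess_total_def by (rule member_le_sum) (use sum_exceeding_nonneg[OF g] in auto)
  finally show ?thesis .
qed

lemma excess_weights_nonneg:
  assumes "g \<in> realization_carrier KP" shows "0 \<le> excess_weights g i"
  using sum_exceeding_nonneg[OF assms] excess_total_pos[OF assms] by (simp add: excess_weights_def)

lemma excess_weights_mono:
  assumes g: "g \<in> realization_carrier KP" and sub: "exceeding g i \<subseteq> exceeding g j"
  shows "excess_weights g i \<le> excess_weights g j"
proof -
  have "sum g (exceeding g i) \<le> sum g (exceeding g j)"
    by (rule sum_mono2)
      (use sub order_complex_carrier_D(1)[OF g] carrier_D(1)[OF g] in \<open>auto simp: exceeding_def\<close>)
  then show ?thesis
    using excess_total_pos[OF g] by (simp add: excess_weights_def divide_right_mono)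
qed

text \<open>\<open>\<psi>\<close> lands in \<open>|\<Delta>|\<close>: its support lies in the excess set of the top element of the chain,
  which is a face of \<open>\<Delta>\<close>.\<close>
lemma excess_weights_carrier:
  assumes g: "g \<in> realization_carrier KP"
  shows "excess_weights g \<in> realization_carrier KD"
proof -
  obtain m where m: "m \<in> supp g" "\<And>c. c \<in> supp g \<Longrightarrow> c \<le> m"
    using finite_chain_greatest[OF order_complex_carrier_D(1)[OF g] carrier_supp_nonempty[OF g]
        order_complex_carrier_D(3)[OF g]] by blast
  define R where "R = excess b m"
  have "m \<in> P" using m order_complex_carrier_D(2)[OF g] by blast
  then have "R \<in> KD" unfolding R_def by (rule excess_in_KD)
  then have sub: "\<And>G. G \<subseteq> R \<Longrightarrow> G \<noteq> {} \<Longrightarrow> G \<in> KD"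
    using abstract_complex_KD unfolding abstract_complex_def by blast
  have zero: "excess_weights g v = 0" if "v \<notin> R" for v
  proof -
    have "exceeding g v = {}" using that m(2) excess_mono unfolding R_def exceeding_def by blast
    then show ?thesis by (simp add: excess_weights_def)
  qed
  have "sum (excess_weights g) R = sum (excess_weights g) UNIV"
    by (rule sum.mono_neutral_left) (auto simp: zero)
  also have "\<dots> = 1"
    using excess_total_pos[OF g]
    by (simp add: excess_weights_def excess_total_def sum_divide_distrib[symmetric])
  finally have "sum (excess_weights g) R = 1" .
  then have "excess_weights g \<in> realization_carrier KD \<and> supp (excess_weights g) \<subseteq> R"
    using carrier_on_face_iff[OF finite sub] excess_weights_nonneg[OF g] zero by blast
  then show ?thesis by blast
qed

lemma excess_weights_continuous:
  assumes R: "finite R"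
  shows "continuous_on {g \<in> realization_carrier KP. supp g \<subseteq> R} excess_weights"
proof -
  let ?S = "{g \<in> realization_carrier KP. supp g \<subseteq> R}"
  have eq: "sum g (exceeding g i) = sum g {c \<in> R. i \<in> excess b c}" if "g \<in> ?S" for g i
    unfolding exceeding_def
    by (rule sum.mono_neutral_left) (use that R in \<open>auto simp: supp_def\<close>)
  have num: "continuous_on ?S (\<lambda>g. sum g {c \<in> R. i \<in> excess b c})" for i
    by (intro continuous_on_sum continuous_on_coordinate)
  have den: "continuous_on ?S (\<lambda>g. \<Sum>j\<in>UNIV. sum g {c \<in> R. j \<in> excess b c})"
    by (intro continuous_on_sum continuous_on_coordinate)
  have "(\<Sum>j\<in>UNIV. sum g {c \<in> R. j \<in> excess b c}) = excess_total g" if "g \<in> ?S" for g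
    unfolding excess_total_def using eq[OF that] by simp
  then have nz: "(\<Sum>j\<in>UNIV. sum g {c \<in> R. j \<in> excess b c}) \<noteq> 0" if "g \<in> ?S" for g
    using excess_total_pos that by fastforce
  show ?thesis
  proof (rule continuous_on_coordinatewise_then_product)
    fix i
    have "continuous_on ?S
        (\<lambda>g. sum g {c \<in> R. i \<in> excess b c} / (\<Sum>j\<in>UNIV. sum g {c \<in> R. j \<in> excess b c}))"
      using num den nz by (intro continuous_on_divide) auto
    then show "continuous_on ?S (\<lambda>g. excess_weights g i)"
      by (rule continuous_on_eq) (simp add: excess_weights_def excess_total_def eq)
  qed
qed

text \<open>\<open>\<psi> \<circ> \<phi>\<close> does not enlarge supports: every vertex of \<open>\<phi>(f)\<close> exceeds \<open>b\<close> only inside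
  \<open>supp f\<close>.\<close>
lemma excess_weights_level_chain_supp: "supp (excess_weights (level_chain f)) \<subseteq> supp f"
proof
  fix i assume "i \<in> supp (excess_weights (level_chain f))"
  then have "exceeding (level_chain f) i \<noteq> {}" by (auto simp: supp_def excess_weights_def)
  then obtain c where "c \<in> supp (level_chain f)" "i \<in> excess b c" by (auto simp: exceeding_def)
  then show "i \<in> supp f" using level_chain_supp(3) by blast
qed

text \<open>Take \<open>i\<^sub>1 \<in> G\<close> with the smallest up-set and its least element \<open>c\<close>;
  a coordinate in \<open>excess b c\<close> but outside \<open>G\<close> would carry at least the weight of \<open>i\<^sub>1\<close>.\<close>
lemma positive_gap_is_excess:
  assumes g: "g \<in> realization_carrier KP"
    and G: "G \<noteq> {}" "gap (excess_weights g) G > 0"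
  shows "\<exists>c\<in>supp g. G = excess b c"
proof -
  have "\<exists>i1\<in>G. \<forall>i\<in>G. exceeding g i1 \<subseteq> exceeding g i"
    by (rule nested_family_least) (use G(1) exceeding_nested[OF g] in auto)
  then obtain i1 where i1: "i1 \<in> G" "\<And>i. i \<in> G \<Longrightarrow> exceeding g i1 \<subseteq> exceeding g i"
    by blast
  have "0 < excess_weights g i1" by (rule gap_pos(1)[OF G i1(1)])
  then have "exceeding g i1 \<noteq> {}" by (auto simp: excess_weights_def)
  moreover have "finite (exceeding g i1)"
    using order_complex_carrier_D(1)[OF g] by (simp add: exceeding_def)
  moreover have "x \<le> y \<or> y \<le> x" if "x \<in> exceeding g i1" "y \<in> exceeding g i1" for x y
    using that order_complex_carrier_D(3)[OF g] by (simp add: exceeding_def)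
  ultimately obtain c where c: "c \<in> exceeding g i1" "\<And>c'. c' \<in> exceeding g i1 \<Longrightarrow> c \<le> c'"
    using finite_chain_least[of "exceeding g i1"] by blast
  have cs: "c \<in> supp g" using c(1) by (simp add: exceeding_def)
  have "G \<subseteq> excess b c"
    using c(1) i1(2) unfolding exceeding_def by blast
  moreover have "excess b c \<subseteq> G"
  proof
    fix i assume i: "i \<in> excess b c"
    show "i \<in> G"
    proof (rule ccontr)
      assume "i \<notin> G"
      then have "excess_weights g i < excess_weights g i1" by (rule gap_pos(2)[OF G i1(1)])
      moreover have "exceeding g i1 \<subseteq> exceeding g i"
      proof
        fix c' assume "c' \<in> exceeding g i1"
        then show "c' \<in> exceeding g i"
          using exceeding_up[of c g i c'] c(2) i cs by (auto simp: exceeding_def)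
      qed
      then have "excess_weights g i1 \<le> excess_weights g i" by (rule excess_weights_mono[OF g])
      ultimately show False by simp
    qed
  qed
  ultimately show ?thesis using cs by blast
qed

lemma level_chain_excess_weights_supp:
  assumes g: "g \<in> realization_carrier KP"
  shows "supp (level_chain (excess_weights g)) \<subseteq> corner a b ` supp g"
proof
  fix p assume "p \<in> supp (level_chain (excess_weights g))"
  then have "level_chain (excess_weights g) p \<noteq> 0" by (simp add: supp_def)
  note nz = level_chain_nonzero[OF this]
  obtain c where "c \<in> supp g" "excess b p = excess b c"
    using positive_gap_is_excess[OF g nz(1,3)] by blast
  then show "p \<in> corner a b ` supp g" using nz(2) unfolding corner_def by auto
qed

end

section \<open>The prism homotopy\<close>

text \<open>Think of the vertices of a chain as occupying consecutive intervals \<open>[l, l + x]\<close> of \<open>[0,1]\<close>,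
  in increasing order. At time \<open>t\<close> the part of each interval lying below \<open>t\<close> has moved to the
  corner of its vertex, the part above \<open>t\<close> stays.\<close>
definition prism_stay :: "real \<Rightarrow> real \<Rightarrow> real \<Rightarrow> real" where
  "prism_stay t l x = max 0 (l + x - max l t)"

definition prism_move :: "real \<Rightarrow> real \<Rightarrow> real \<Rightarrow> real" where
  "prism_move t l x = max 0 (min (l + x) t - l)"

lemma prism_stay_move_zero: "prism_stay t l 0 = 0" "prism_move t l 0 = 0"
  by (auto simp: prism_stay_def prism_move_def max_def min_def)

lemma prism_stay_plus_move: "0 \<le> x \<Longrightarrow> prism_stay t l x + prism_move t l x = x"
  by (auto simp: prism_stay_def prism_move_def max_def min_def)

lemma continuous_on_prism_stay:
  "continuous_on S f \<Longrightarrow> continuous_on S g \<Longrightarrow> continuous_on S h \<Longrightarrow>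
    continuous_on S (\<lambda>x. prism_stay (f x) (g x) (h x))"
  unfolding prism_stay_def by (intro continuous_intros)

lemma continuous_on_prism_move:
  "continuous_on S f \<Longrightarrow> continuous_on S g \<Longrightarrow> continuous_on S h \<Longrightarrow>
    continuous_on S (\<lambda>x. prism_move (f x) (g x) (h x))"
  unfolding prism_move_def by (intro continuous_intros)

lemma continuous_on_snd_coordinate:
  "continuous_on S (\<lambda>z::'x::topological_space \<times> ('a \<Rightarrow> 'b::topological_space). snd z c)"
  by (rule continuous_on_product_then_coordinatewise[OF continuous_on_snd[OF continuous_on_id]])

context ideal_box
begin

definition push_to_corners :: "(('n \<Rightarrow> nat) \<Rightarrow> real) \<Rightarrow> ('n \<Rightarrow> nat) \<Rightarrow> real" where
  "push_to_corners g = (\<lambda>p. sum g {c \<in> supp g. corner a b c = p})"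

definition mass_below :: "(('n \<Rightarrow> nat) \<Rightarrow> real) \<Rightarrow> ('n \<Rightarrow> nat) \<Rightarrow> real" where
  "mass_below g c = sum g {c' \<in> supp g. c' < c}"

definition prism :: "real \<Rightarrow> (('n \<Rightarrow> nat) \<Rightarrow> real) \<Rightarrow> ('n \<Rightarrow> nat) \<Rightarrow> real" where
  "prism t g = (\<lambda>p. (\<Sum>c\<in>{c \<in> supp g. c = p}. prism_stay t (mass_below g c) (g c)) +
                    (\<Sum>c\<in>{c \<in> supp g. corner a b c = p}. prism_move t (mass_below g c) (g c)))"

lemma push_to_corners_carrier:
  assumes g: "g \<in> realization_carrier KP"
  shows "push_to_corners g \<in> realization_carrier KP"
    and "supp (push_to_corners g) \<subseteq> corner a b ` supp g"
proof -
  define R where "R = corner a b ` supp g"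
  have fin: "finite (supp g)" by (rule order_complex_carrier_D(1)[OF g])
  then have "finite R" unfolding R_def by simp
  have sub: "\<And>G. G \<subseteq> R \<Longrightarrow> G \<noteq> {} \<Longrightarrow> G \<in> KP" using corners_face[OF g] R_def by blast
  have "\<forall>v. 0 \<le> push_to_corners g v"
    unfolding push_to_corners_def using carrier_D(1)[OF g] by (auto intro: sum_nonneg)
  moreover have "\<forall>v. v \<notin> R \<longrightarrow> push_to_corners g v = 0"
  proof (intro allI impI)
    fix v assume "v \<notin> R"
    then have e: "{c \<in> supp g. corner a b c = v} = {}" unfolding R_def by blast
    show "push_to_corners g v = 0" unfolding push_to_corners_def e by simp
  qed
  moreover have "sum (push_to_corners g) R = sum g (supp g)"
    unfolding push_to_corners_def by (rule sum.group[OF fin \<open>finite R\<close>]) (simp add: R_def)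
  ultimately have "push_to_corners g \<in> realization_carrier KP \<and> supp (push_to_corners g) \<subseteq> R"
    using carrier_on_face_iff[OF \<open>finite R\<close> sub] carrier_D(4)[OF g] by simp
  then show "push_to_corners g \<in> realization_carrier KP" "supp (push_to_corners g) \<subseteq> corner a b ` supp g"
    unfolding R_def by blast+
qed

lemma mass_below_nonneg: "g \<in> realization_carrier KP \<Longrightarrow> 0 \<le> mass_below g c"
  unfolding mass_below_def by (intro sum_nonneg) (auto dest: carrier_D(1))

lemma mass_below_plus:
  assumes g: "g \<in> realization_carrier KP" and c: "c \<in> supp g"
  shows "mass_below g c + g c = sum g (insert c {c' \<in> supp g. c' < c})"
  using order_complex_carrier_D(1)[OF g] unfolding mass_below_def by (simp add: sum.insert)

lemma mass_below_le1:
  assumes g: "g \<in> realization_carrier KP" and c: "c \<in> supp g"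
  shows "mass_below g c + g c \<le> 1"
proof -
  have "sum g (insert c {c' \<in> supp g. c' < c}) \<le> sum g (supp g)"
    by (rule sum_mono2) (use order_complex_carrier_D(1)[OF g] c carrier_D(1)[OF g] in auto)
  then show ?thesis using mass_below_plus[OF g c] carrier_D(4)[OF g] by simp
qed

lemma mass_below_mono:
  assumes g: "g \<in> realization_carrier KP" and c: "c1 \<in> supp g" "c2 \<in> supp g" "c1 < c2"
  shows "mass_below g c1 + g c1 \<le> mass_below g c2"
proof -
  have "sum g (insert c1 {c' \<in> supp g. c' < c1}) \<le> sum g {c' \<in> supp g. c' < c2}"
    by (rule sum_mono2)
      (use order_complex_carrier_D(1)[OF g] c carrier_D(1)[OF g] in \<open>auto intro: less_trans\<close>)
  then show ?thesis using mass_below_plus[OF g c(1)] unfolding mass_below_def by simp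
qed

lemma prism_at_0:
  assumes g: "g \<in> realization_carrier KP"
  shows "prism 0 g = g"
proof
  fix p
  have move: "prism_move 0 (mass_below g c) (g c) = 0" for c
    using mass_below_nonneg[OF g, of c] carrier_D(1)[OF g, of c] by (simp add: prism_move_def)
  have stay: "prism_stay 0 (mass_below g c) (g c) = g c" for c
    using mass_below_nonneg[OF g, of c] carrier_D(1)[OF g, of c] by (simp add: prism_stay_def)
  show "prism 0 g p = g p"
  proof (cases "p \<in> supp g")
    case True
    then have e: "{c \<in> supp g. c = p} = {p}" by auto
    show ?thesis unfolding prism_def e by (simp add: move stay)
  next
    case False
    then have e: "{c \<in> supp g. c = p} = {}" by auto
    show ?thesis unfolding prism_def e using False by (simp add: move supp_def)
  qed
qed

lemma prism_at_1:
  assumes g: "g \<in> realization_carrier KP"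
  shows "prism 1 g = push_to_corners g"
proof
  fix p
  have "prism_stay 1 (mass_below g c) (g c) = 0" if "c \<in> supp g" for c
    using mass_below_le1[OF g that] by (simp add: prism_stay_def)
  then have "(\<Sum>c\<in>{c \<in> supp g. c = p}. prism_stay 1 (mass_below g c) (g c)) = 0"
    by (intro sum.neutral) auto
  moreover have "prism_move 1 (mass_below g c) (g c) = g c" if "c \<in> supp g" for c
    using mass_below_le1[OF g that] carrier_D(1)[OF g, of c] by (simp add: prism_move_def)
  then have "(\<Sum>c\<in>{c \<in> supp g. corner a b c = p}. prism_move 1 (mass_below g c) (g c)) =
      sum g {c \<in> supp g. corner a b c = p}"
    by (intro sum.cong) auto
  ultimately show "prism 1 g p = push_to_corners g p"
    unfolding prism_def push_to_corners_def by simp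
qed

lemma prism_chain:
  assumes g: "g \<in> realization_carrier KP"
    and c1: "c1 \<in> supp g" "t < mass_below g c1 + g c1" and c2: "c2 \<in> supp g" "mass_below g c2 < t"
  shows "c1 \<le> corner a b c2 \<or> corner a b c2 \<le> c1"
proof -
  have "\<not> c1 < c2"
  proof
    assume "c1 < c2"
    then have "mass_below g c1 + g c1 \<le> mass_below g c2" by (rule mass_below_mono[OF g c1(1) c2(1)])
    then show False using c1(2) c2(2) by simp
  qed
  then have "c2 \<le> c1" using order_complex_carrier_D(3)[OF g c1(1) c2(1)] by (auto simp: less_le)
  moreover have "corner a b c2 \<le> c2" using c2(1) order_complex_carrier_D(2)[OF g] corner_le by blast
  ultimately show ?thesis by (blast intro: order.trans)
qed

lemma prism_nonneg: "0 \<le> prism t g p"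
  unfolding prism_def prism_stay_def prism_move_def by (intro add_nonneg_nonneg sum_nonneg) auto

lemma prism_supp:
  "supp (prism t g) \<subseteq>
    {c \<in> supp g. t < mass_below g c + g c} \<union> corner a b ` {c \<in> supp g. mass_below g c < t}"
proof
  fix p assume "p \<in> supp (prism t g)"
  then have "(\<Sum>c\<in>{c \<in> supp g. c = p}. prism_stay t (mass_below g c) (g c)) \<noteq> 0 \<or>
      (\<Sum>c\<in>{c \<in> supp g. corner a b c = p}. prism_move t (mass_below g c) (g c)) \<noteq> 0"
    unfolding prism_def supp_def by auto
  then show "p \<in> {c \<in> supp g. t < mass_below g c + g c} \<union> corner a b ` {c \<in> supp g. mass_below g c < t}"
  proof
    assume "(\<Sum>c\<in>{c \<in> supp g. c = p}. prism_stay t (mass_below g c) (g c)) \<noteq> 0"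
    then obtain c where "c \<in> supp g" "c = p" "prism_stay t (mass_below g c) (g c) \<noteq> 0"
      by (auto elim: sum.not_neutral_contains_not_neutral)
    then show ?thesis by (auto simp: prism_stay_def max_def split: if_splits)
  next
    assume "(\<Sum>c\<in>{c \<in> supp g. corner a b c = p}. prism_move t (mass_below g c) (g c)) \<noteq> 0"
    then obtain c where "c \<in> supp g" "corner a b c = p" "prism_move t (mass_below g c) (g c) \<noteq> 0"
      by (auto elim: sum.not_neutral_contains_not_neutral)
    then show ?thesis by (auto simp: prism_move_def max_def min_def split: if_splits)
  qed
qed

lemma prism_sum:
  assumes g: "g \<in> realization_carrier KP"
  shows "sum (prism t g) (supp g \<union> corner a b ` supp g) = 1"
proof -
  define S where "S = supp g"
  define R where "R = S \<union> corner a b ` S"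
  have "finite S" using order_complex_carrier_D(1)[OF g] S_def by simp
  then have "finite R" using R_def by simp
  have "sum (prism t g) R = (\<Sum>p\<in>R. \<Sum>c\<in>{c \<in> S. c = p}. prism_stay t (mass_below g c) (g c)) +
      (\<Sum>p\<in>R. \<Sum>c\<in>{c \<in> S. corner a b c = p}. prism_move t (mass_below g c) (g c))"
    unfolding prism_def S_def by (simp add: sum.distrib)
  also have "\<dots> = (\<Sum>c\<in>S. prism_stay t (mass_below g c) (g c)) + (\<Sum>c\<in>S. prism_move t (mass_below g c) (g c))"
    using sum.group[OF \<open>finite S\<close> \<open>finite R\<close>, of "\<lambda>c. c" "\<lambda>c. prism_stay t (mass_below g c) (g c)"]
      sum.group[OF \<open>finite S\<close> \<open>finite R\<close>, of "corner a b" "\<lambda>c. prism_move t (mass_below g c) (g c)"]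
    unfolding R_def by simp
  also have "\<dots> = sum g S"
    unfolding sum.distrib[symmetric] by (rule sum.cong) (auto intro: prism_stay_plus_move carrier_D(1)[OF g])
  also have "\<dots> = 1" using carrier_D(4)[OF g] S_def by simp
  finally show ?thesis unfolding R_def S_def .
qed

lemma prism_carrier:
  assumes g: "g \<in> realization_carrier KP"
  shows "prism t g \<in> realization_carrier KP"
    and "supp (prism t g) \<subseteq> supp g \<union> corner a b ` supp g"
proof -
  define Rc where "Rc = {c \<in> supp g. t < mass_below g c + g c} \<union> corner a b ` {c \<in> supp g. mass_below g c < t}"
  have suppRc: "supp (prism t g) \<subseteq> Rc" unfolding Rc_def by (rule prism_supp)
  then show supp: "supp (prism t g) \<subseteq> supp g \<union> corner a b ` supp g" unfolding Rc_def by blast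
  have "Rc \<subseteq> P"
    unfolding Rc_def using order_complex_carrier_D(2)[OF g] corner_in_P by blast
  moreover have "x \<le> y \<or> y \<le> x" if "x \<in> Rc" "y \<in> Rc" for x y
    using that order_complex_carrier_D(3)[OF g] corner_mono prism_chain[OF g] unfolding Rc_def
    by (elim UnE) blast+
  moreover have "finite (supp (prism t g))"
    using finite_subset[OF supp] order_complex_carrier_D(1)[OF g] by simp
  ultimately have "supp (prism t g) \<in> KP" using suppRc unfolding order_complex_def by blast
  moreover have "finite (supp g \<union> corner a b ` supp g)" using order_complex_carrier_D(1)[OF g] by simp
  ultimately show "prism t g \<in> realization_carrier KP"
    using carrier_intro[OF prism_nonneg _ supp prism_sum[OF g]] by blast
qed

lemma prism_continuous:
  assumes C: "C \<in> KP"
  shows "continuous_on ({0..1} \<times> closed_simplex KP C) (\<lambda>z. prism (fst z) (snd z))"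
proof (rule continuous_on_coordinatewise_then_product)
  fix p
  let ?D = "{0..1::real} \<times> closed_simplex KP C"
  have "finite C" using C unfolding order_complex_def by blast
  let ?below = "\<lambda>g c. sum g {c' \<in> C. c' < c}"
  let ?expr = "\<lambda>z. (\<Sum>c\<in>{c \<in> C. c = p}. prism_stay (fst z) (?below (snd z) c) (snd z c)) +
      (\<Sum>c\<in>{c \<in> C. corner a b c = p}. prism_move (fst z) (?below (snd z) c) (snd z c))"
  have "continuous_on ?D ?expr"
    by (intro continuous_on_add continuous_on_sum continuous_on_prism_stay continuous_on_prism_move
        continuous_on_fst continuous_on_id continuous_on_snd_coordinate)
  moreover have "?expr z = prism (fst z) (snd z) p" if "z \<in> ?D" for z
  proof -
    have sC: "supp (snd z) \<subseteq> C" using that by (auto simp: closed_simplex_eq)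
    have below: "mass_below (snd z) c = ?below (snd z) c" for c
      unfolding mass_below_def
      by (rule sum.mono_neutral_left) (use \<open>finite C\<close> sC in \<open>auto simp: supp_def\<close>)
    have "(\<Sum>c\<in>{c \<in> supp (snd z). c = p}. prism_stay (fst z) (mass_below (snd z) c) (snd z c)) =
        (\<Sum>c\<in>{c \<in> C. c = p}. prism_stay (fst z) (mass_below (snd z) c) (snd z c))"
      using \<open>finite C\<close> sC by (intro sum.mono_neutral_left) (auto simp: supp_def prism_stay_move_zero)
    moreover have "(\<Sum>c\<in>{c \<in> supp (snd z). corner a b c = p}. prism_move (fst z) (mass_below (snd z) c) (snd z c)) =
        (\<Sum>c\<in>{c \<in> C. corner a b c = p}. prism_move (fst z) (mass_below (snd z) c) (snd z c))"
      using \<open>finite C\<close> sC by (intro sum.mono_neutral_left) (auto simp: supp_def prism_stay_move_zero)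
    ultimately show ?thesis unfolding prism_def by (simp add: below)
  qed
  ultimately show "continuous_on ?D (\<lambda>z. prism (fst z) (snd z) p)"
    by (rule continuous_on_eq)
qed

section \<open>The homotopy equivalence\<close>

text \<open>Both maps are continuous: \<open>\<phi>\<close> takes values in the finitely many face points, and \<open>\<psi>\<close>
  in the realization of a finite complex.\<close>
lemma level_chain_continuous_map:
  "continuous_map (geometric_realization KD) (geometric_realization KP) level_chain"
proof (rule continuous_map_realizations[OF order_complex_abstract_complex])
  fix F assume "F \<in> KD"
  have "continuous_on (closed_simplex KD F) level_chain"
    by (rule continuous_on_subset[OF level_chain_continuous closed_simplex_subset_carrier])
  moreover have "level_chain f \<in> realization_carrier KP \<and>
      supp (level_chain f) \<subseteq> face_point a b ` {G. G \<noteq> {}}" if "f \<in> closed_simplex KD F" for f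
    using level_chain_supp(1,2) level_chain_carrier that closed_simplex_subset_carrier[of KD F] by blast
  ultimately show "continuous_on (closed_simplex KD F) level_chain \<and>
      maps_into_finite_subcomplex KP (closed_simplex KD F) level_chain"
    unfolding maps_into_finite_subcomplex_def by (intro conjI exI[of _ "face_point a b ` {G. G \<noteq> {}}"]) auto
qed

lemma excess_weights_continuous_map:
  "continuous_map (geometric_realization KP) (geometric_realization KD) excess_weights"
proof (rule continuous_map_realizations[OF abstract_complex_KD])
  fix F assume "F \<in> KP"
  then have "finite F" by (simp add: order_complex_def)
  then show "continuous_on (closed_simplex KP F) excess_weights \<and>
      maps_into_finite_subcomplex KD (closed_simplex KP F) excess_weights"
    unfolding closed_simplex_eq maps_into_finite_subcomplex_def
    using excess_weights_continuous excess_weights_carrier by (intro conjI exI[of _ UNIV]) auto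
qed

lemma excess_weights_level_chain_homotopic:
  "homotopic_with (\<lambda>_. True) (geometric_realization KD) (geometric_realization KD)
    (excess_weights \<circ> level_chain) id"
proof (rule homotopic_straight_line[OF abstract_complex_KD])
  have "level_chain ` realization_carrier KD \<subseteq>
      {g \<in> realization_carrier KP. supp g \<subseteq> face_point a b ` {G. G \<noteq> {}}}"
    using level_chain_carrier level_chain_supp(1,2) by blast
  then have "continuous_on (level_chain ` realization_carrier KD) excess_weights"
    by (rule continuous_on_subset[OF excess_weights_continuous, rotated]) simp
  then have "continuous_on (realization_carrier KD) (excess_weights \<circ> level_chain)"
    by (rule continuous_on_compose[OF level_chain_continuous])
  then show "continuous_on (closed_simplex KD F) (excess_weights \<circ> level_chain) \<and>
      continuous_on (closed_simplex KD F) id" for F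
    using closed_simplex_subset_carrier by (auto intro: continuous_on_subset continuous_on_id)
  show "\<exists>H. finite H \<and> (\<forall>x\<in>closed_simplex KD F. supp ((excess_weights \<circ> level_chain) x) \<union> supp (id x) \<subseteq> H)"
    for F by (intro exI[of _ UNIV]) simp
  fix f assume f: "f \<in> realization_carrier KD"
  then show "(excess_weights \<circ> level_chain) f \<in> realization_carrier KD \<and> id f \<in> realization_carrier KD \<and>
      supp ((excess_weights \<circ> level_chain) f) \<union> supp (id f) \<in> KD"
    using excess_weights_carrier level_chain_carrier excess_weights_level_chain_supp carrier_D(3)
    by (simp add: Un_absorb1)
qed

lemma push_to_corners_homotopic:
  "homotopic_with (\<lambda>_. True) (geometric_realization KP) (geometric_realization KP) id push_to_corners"
proof (rule homotopic_realization_maps[OF order_complex_abstract_complex, where h = "\<lambda>z. prism (fst z) (snd z)"])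
  fix F assume F: "F \<in> KP"
  then have "finite F" by (simp add: order_complex_def)
  have "prism t g \<in> realization_carrier KP \<and> supp (prism t g) \<subseteq> F \<union> corner a b ` F"
    if "g \<in> closed_simplex KP F" for t g
    using prism_carrier[of g t] that by (auto simp: closed_simplex_eq)
  then show "continuous_on ({0..1} \<times> closed_simplex KP F) (\<lambda>z. prism (fst z) (snd z)) \<and>
      maps_into_finite_subcomplex KP ({0..1} \<times> closed_simplex KP F) (\<lambda>z. prism (fst z) (snd z))"
    unfolding maps_into_finite_subcomplex_def using prism_continuous[OF F] \<open>finite F\<close>
    by (intro conjI exI[of _ "F \<union> corner a b ` F"]) auto
qed (simp_all add: prism_at_0 prism_at_1)

text \<open>\<open>push_to_corners \<simeq> \<phi> \<circ> \<psi>\<close> by a straight line: both are supported in the corners of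
  \<open>supp g\<close>, which form a face of \<open>\<Delta>(P)\<close>.\<close>
lemma push_to_corners_level_chain_homotopic:
  "homotopic_with (\<lambda>_. True) (geometric_realization KP) (geometric_realization KP)
    push_to_corners (level_chain \<circ> excess_weights)"
proof (rule homotopic_straight_line[OF order_complex_abstract_complex])
  fix F assume F: "F \<in> KP"
  then have "finite F" by (simp add: order_complex_def)
  have "continuous_on (closed_simplex KP F) (\<lambda>g. push_to_corners g p)" for p
  proof (rule continuous_on_eq)
    show "continuous_on (closed_simplex KP F) (\<lambda>g. sum g {c \<in> F. corner a b c = p})"
      by (intro continuous_on_sum continuous_on_coordinate)
    show "sum g {c \<in> F. corner a b c = p} = push_to_corners g p" if "g \<in> closed_simplex KP F" for g
      unfolding push_to_corners_def
      by (rule sum.mono_neutral_right) (use \<open>finite F\<close> that in \<open>auto simp: supp_def closed_simplex_eq\<close>)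
  qed
  then have "continuous_on (closed_simplex KP F) push_to_corners"
    by (rule continuous_on_coordinatewise_then_product)
  moreover have "continuous_on (closed_simplex KP F) (level_chain \<circ> excess_weights)"
    by (rule continuous_on_compose[OF continuous_on_subset[OF excess_weights_continuous[OF \<open>finite F\<close>]]
          continuous_on_subset[OF level_chain_continuous]])
      (auto simp: closed_simplex_eq intro: excess_weights_carrier)
  ultimately show "continuous_on (closed_simplex KP F) push_to_corners \<and>
      continuous_on (closed_simplex KP F) (level_chain \<circ> excess_weights)" by blast
  have "supp (push_to_corners g) \<union> supp ((level_chain \<circ> excess_weights) g) \<subseteq> corner a b ` F"
    if "g \<in> closed_simplex KP F" for g
    using that push_to_corners_carrier(2) level_chain_excess_weights_supp
    by (fastforce simp: closed_simplex_eq)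
  then show "\<exists>H. finite H \<and> (\<forall>g\<in>closed_simplex KP F.
      supp (push_to_corners g) \<union> supp ((level_chain \<circ> excess_weights) g) \<subseteq> H)"
    using \<open>finite F\<close> by blast
next
  fix g assume g: "g \<in> realization_carrier KP"
  have "supp (push_to_corners g) \<union> supp ((level_chain \<circ> excess_weights) g) \<in> KP"
    using push_to_corners_carrier[OF g] level_chain_excess_weights_supp[OF g]
      carrier_supp_nonempty[OF push_to_corners_carrier(1)[OF g]]
    by (intro corners_face[OF g]) auto
  then show "push_to_corners g \<in> realization_carrier KP \<and>
      (level_chain \<circ> excess_weights) g \<in> realization_carrier KP \<and>
      supp (push_to_corners g) \<union> supp ((level_chain \<circ> excess_weights) g) \<in> KP"
    using push_to_corners_carrier(1)[OF g] level_chain_carrier[OF excess_weights_carrier[OF g]] by simp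
qed

theorem realizations_homotopy_equivalent:
  "geometric_realization KD homotopy_equivalent_space geometric_realization KP"
proof -
  have "homotopic_with (\<lambda>_. True) (geometric_realization KP) (geometric_realization KP)
      (level_chain \<circ> excess_weights) id"
    using homotopic_with_trans[OF push_to_corners_homotopic push_to_corners_level_chain_homotopic]
    by (rule homotopic_with_sym[THEN iffD1])
  then show ?thesis
    unfolding homotopy_equivalent_space_def
    using level_chain_continuous_map excess_weights_continuous_map
      excess_weights_level_chain_homotopic by blast
qed

end

theorem mainTheorem18:
  fixes J :: "('n::finite \<Rightarrow> nat) set" and a b :: "'n \<Rightarrow> nat"
  assumes "order_ideal J" and "a \<le> b"
  shows "geometric_realization (Delta_complex a b J)
           homotopy_equivalent_space
         geometric_realization
           (order_complex (J \<inter> (\<lambda>c. a + c) ` (UNIV - {0..b - a})))"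
proof -
  interpret ideal_box a b J using assms by unfold_locales
  show ?thesis using realizations_homotopy_equivalent by (simp add: outer_part_def)
qed

end
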